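(* In the three-agent investor/hedge-fund setting with restricted reports, fix the investor's report $\tilde m$ and let $\tilde\alpha=\tilde m/(2+\rho)$. Set $c=\frac{a\nu-\tilde\alpha(1-\nu)}{\nu(2-\nu)}$ and $s=\frac{\eta(1-\nu)}{\nu(2-\nu)}$. (i) Given fund 3's report $\tilde b$, the report $\tilde a$ maximizing fund 2's utility $g_2$ is uniquely $\tilde a^*=c+s\tilde b$. (ii) Symmetrically, given fund 2's report $\tilde a$, the report $\tilde b$ maximizing fund 3's utility $g_3$ is uniquely $\tilde b^*=c+s\tilde a$.
   Context: Three agents: agent 1 (investor), agents 2 and 3 (hedge funds). Parameters $m,a\in\mathbb{R}$ and $\rho\in(-1,1)$; true beliefs $M=\begin{pmatrix}0&a&a\\ m&0&0\\ m&0&0\end{pmatrix}$ (column $i$ is agent $i$'s true belief vector $\mu_i$), $\Sigma=\begin{pmatrix}1&0&0\\0&1&\rho\\0&\rho&1\end{pmatrix}$, $\Gamma=I_3$. Restricted reports: the investor reports a common value $\tilde m$ for $M'_{21}=M'_{31}$, fund 2 reports $M'_{12}=\tilde a$, fund 3 reports $M'_{13}=\tilde b$, and all other entries of $M'$ equal the true value $0$. The stable point for $M'$ is the unique $(W,P)$ with $W=W^T$, $P^T=-P$ and $M'-P=2\Sigma W\Gamma$. Agent $i$'s utility is $g_i=w_i^T(\mu_i-Pe_i)-w_i^T\Sigma w_i$, $w_i=We_i$. Define $\nu=\tfrac12\big(\tfrac1{2-\rho}+\tfrac1{2+\rho}\big)$ and $\eta=\tfrac12\big(\tfrac1{2-\rho}-\tfrac1{2+\rho}\big)$.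 *)

theory Defs
  imports "HOL-Analysis.Analysis"
begin

type_synonym mat3 = "real^3^3"

definition is_stable_point :: "mat3 \<Rightarrow> mat3 \<Rightarrow> mat3 \<Rightarrow> mat3 \<Rightarrow> mat3 \<Rightarrow> bool" where
  "is_stable_point M' Sig Gam W P \<longleftrightarrow>
     transpose W = W \<and> transpose P = - P \<and> M' - P = 2 *\<^sub>R (Sig ** W ** Gam)"

definition stable_point :: "mat3 \<Rightarrow> mat3 \<Rightarrow> mat3 \<Rightarrow> mat3 \<times> mat3" where
  "stable_point M' Sig Gam = (THE (W, P). is_stable_point M' Sig Gam W P)"

definition utility :: "mat3 \<Rightarrow> mat3 \<Rightarrow> mat3 \<Rightarrow> mat3 \<Rightarrow> 3 \<Rightarrow> real" where
  "utility M Sig Gam M' i =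
     (let (W, P) = stable_point M' Sig Gam; w = W *v axis i 1
      in w \<bullet> (column i M - P *v axis i 1) - w \<bullet> (Sig *v w))"

definition true_beliefs :: "real \<Rightarrow> real \<Rightarrow> mat3" where
  "true_beliefs m a = vector [vector [0, a, a], vector [m, 0, 0], vector [m, 0, 0]]"

definition reported_beliefs :: "real \<Rightarrow> real \<Rightarrow> real \<Rightarrow> mat3" where
  "reported_beliefs tm ta tb = vector [vector [0, ta, tb], vector [tm, 0, 0], vector [tm, 0, 0]]"

definition Sigma_rho :: "real \<Rightarrow> mat3" where
  "Sigma_rho \<rho> = vector [vector [1, 0, 0], vector [0, 1, \<rho>], vector [0, \<rho>, 1]]"

definition nu :: "real \<Rightarrow> real" where
  "nu \<rho> = (1/2) * (1 / (2 - \<rho>) + 1 / (2 + \<rho>))"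

definition eta :: "real \<Rightarrow> real" where
  "eta \<rho> = (1/2) * (1 / (2 - \<rho>) - 1 / (2 + \<rho>))"

definition g :: "real \<Rightarrow> real \<Rightarrow> real \<Rightarrow> 3 \<Rightarrow> real \<Rightarrow> real \<Rightarrow> real \<Rightarrow> real" where
  "g m a \<rho> i tm ta tb =
     utility (true_beliefs m a) (Sigma_rho \<rho>) (mat 1) (reported_beliefs tm ta tb) i"

end

theory Submission
  imports Defs
begin

text \<open>The stable-point equations are linear in \<open>(W, P)\<close> and, for \<open>|\<rho>| < 1\<close>, the homogeneous
  system has only the trivial solution; so the stable point is the explicit one whose prices
  \<open>P\<^sub>1\<^sub>2, P\<^sub>1\<^sub>3\<close> are affine in the reports, with slope \<open>1 - \<nu>\<close> in the fund's own report.
  Fund 2 then holds \<open>(a\<^sub>r - P\<^sub>1\<^sub>2)/2\<close> of asset 1, where \<open>a\<^sub>r\<close> is its report, so its utility is a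
  concave quadratic in \<open>a\<^sub>r\<close> with leading coefficient \<open>-\<nu>(2 - \<nu>)/4\<close> and vertex \<open>c + s b\<^sub>r\<close>.
  Fund 3's utility is fund 2's with the two reports exchanged.\<close>

lemma four_minus_square_pos: "\<bar>\<rho>\<bar> < 2 \<Longrightarrow> 0 < 4 - (\<rho>::real)\<^sup>2"
proof -
  assume "\<bar>\<rho>\<bar> < 2"
  then have "0 < (2 - \<rho>) * (2 + \<rho>)" by (intro mult_pos_pos) auto
  then show ?thesis by (simp add: algebra_simps power2_eq_square)
qed

lemma nu_eq: "\<bar>\<rho>\<bar> < 2 \<Longrightarrow> nu \<rho> = 2 / (4 - \<rho>\<^sup>2)"
  by (simp add: nu_def field_simps power2_eq_square)

lemma eta_eq: "\<bar>\<rho>\<bar> < 2 \<Longrightarrow> eta \<rho> = \<rho> / (4 - \<rho>\<^sup>2)"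
  by (simp add: eta_def field_simps power2_eq_square)

lemma nu_pos: "\<bar>\<rho>\<bar> < 2 \<Longrightarrow> 0 < nu \<rho>"
  using four_minus_square_pos by (simp add: nu_eq)

lemma nu_less_one: "\<bar>\<rho>\<bar> < 1 \<Longrightarrow> nu \<rho> < 1"
  using four_minus_square_pos[of \<rho>] abs_square_less_1[of \<rho>] by (simp add: nu_eq)

lemma one_minus_nu_eq: "\<bar>\<rho>\<bar> < 2 \<Longrightarrow> 1 - nu \<rho> = (2 - \<rho>\<^sup>2) / (4 - \<rho>\<^sup>2)"
  using four_minus_square_pos[of \<rho>] by (simp add: nu_eq field_simps)

lemma nu_eta_system_1: "\<bar>\<rho>\<bar> < 2 \<Longrightarrow> 2 * (1 - nu \<rho>) + \<rho> * eta \<rho> = 1"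
  using four_minus_square_pos[of \<rho>]
  by (simp add: one_minus_nu_eq eta_eq add_divide_distrib[symmetric] power2_eq_square algebra_simps)

lemma nu_eta_system_2:
  assumes "\<bar>\<rho>\<bar> < 2" shows "2 * eta \<rho> + \<rho> * (1 - nu \<rho>) = \<rho>"
proof -
  have "2 * eta \<rho> + \<rho> * (1 - nu \<rho>) = \<rho> * (4 - \<rho>\<^sup>2) / (4 - \<rho>\<^sup>2)"
    using assms by (simp add: one_minus_nu_eq eta_eq add_divide_distrib[symmetric] algebra_simps)
  then show ?thesis using four_minus_square_pos[OF assms] by simp
qed

lemma transpose_diff: "transpose (A - B) = transpose A - (transpose B :: 'a::ab_group_add^'n^'m)"
  by (simp add: transpose_def vec_eq_iff)

lemma matrix_diff_ldistrib: "A ** (B - C) = A ** B - A ** (C :: 'a::ring_1^'p^'n)"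
  by (simp add: matrix_matrix_mult_def vec_eq_iff algebra_simps sum_subtractf)

lemma matrix_diff_rdistrib: "(A - B) ** C = A ** C - B ** (C :: 'a::ring_1^'p^'n)"
  by (simp add: matrix_matrix_mult_def vec_eq_iff algebra_simps sum_subtractf)

lemma is_stable_point_diff:
  assumes "is_stable_point M' Sig Gam W P" and "is_stable_point M' Sig Gam W' P'"
  shows "is_stable_point 0 Sig Gam (W - W') (P - P')"
proof -
  have "0 - (P - P') = (M' - P) - (M' - P')" by (simp add: algebra_simps)
  with assms show ?thesis unfolding is_stable_point_def
    by (simp add: transpose_diff matrix_diff_ldistrib matrix_diff_rdistrib scaleR_diff_right)
qed

lemma Sigma_rho_mult_rows:
  "(Sigma_rho \<rho> ** W)$1$j = W$1$j"
  "(Sigma_rho \<rho> ** W)$2$j = W$2$j + \<rho> * W$3$j"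
  "(Sigma_rho \<rho> ** W)$3$j = \<rho> * W$2$j + W$3$j"
  by (simp_all add: matrix_matrix_mult_def sum_3 Sigma_rho_def)

lemma stable_point_homogeneous_trivial:
  assumes "\<bar>\<rho>\<bar> < 1" and "is_stable_point 0 (Sigma_rho \<rho>) (mat 1) W P"
  shows "W = 0 \<and> P = 0"
proof -
  have T: "transpose W = W" "transpose P = - P" "- P = 2 *\<^sub>R (Sigma_rho \<rho> ** W)"
    using assms(2) by (simp_all add: is_stable_point_def)
  have sym: "W$j$i = W$i$j" and skew: "P$j$i = - P$i$j"
    and eq: "- P$i$j = 2 * (Sigma_rho \<rho> ** W)$i$j" for i j
    using arg_cong[OF T(1), of "\<lambda>A. A$i$j"] arg_cong[OF T(2), of "\<lambda>A. A$i$j"]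
      arg_cong[OF T(3), of "\<lambda>A. A$i$j"]
    by (simp_all add: transpose_def)
  have sym': "W$2$1 = W$1$2" "W$3$1 = W$1$3" "W$3$2 = W$2$3"
    using sym by simp_all
  have "P$i$i = 0" for i using skew[of i i] by simp
  then have diag: "W$1$1 = 0" "W$2$2 + \<rho> * W$2$3 = 0" "\<rho> * W$2$3 + W$3$3 = 0"
    using eq[of 1 1] eq[of 2 2] eq[of 3 3] by (simp_all add: Sigma_rho_mult_rows sym')
  have rho_sq: "\<rho>\<^sup>2 < 1" using assms(1) by (simp add: abs_square_less_1)
  have off1: "2 * W$1$2 + \<rho> * W$1$3 = 0"
    using eq[of 1 2] eq[of 2 1] skew[of 1 2] by (simp add: Sigma_rho_mult_rows sym')
  have off2: "\<rho> * W$1$2 + 2 * W$1$3 = 0"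
    using eq[of 1 3] eq[of 3 1] skew[of 1 3] by (simp add: Sigma_rho_mult_rows sym')
  have "(4 - \<rho>\<^sup>2) * W$1$2 = 2 * (2 * W$1$2 + \<rho> * W$1$3) - \<rho> * (\<rho> * W$1$2 + 2 * W$1$3)"
    by (simp add: algebra_simps power2_eq_square)
  then have w12: "W$1$2 = 0" using off1 off2 rho_sq by simp
  then have w13: "W$1$3 = 0" using off1 off2 rho_sq by simp
  have off3: "2 * W$2$3 + \<rho> * (W$2$2 + W$3$3) = 0"
    using eq[of 2 3] eq[of 3 2] skew[of 2 3] by (simp add: Sigma_rho_mult_rows sym' algebra_simps)
  have "2 * (1 - \<rho>\<^sup>2) * W$2$3
      = (2 * W$2$3 + \<rho> * (W$2$2 + W$3$3)) - \<rho> * (W$2$2 + \<rho> * W$2$3) - \<rho> * (\<rho> * W$2$3 + W$3$3)"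
    by (simp add: algebra_simps power2_eq_square)
  then have "(1 - \<rho>\<^sup>2) * W$2$3 = 0" using off3 diag(2,3) by simp
  then have w23: "W$2$3 = 0" using rho_sq by simp
  have W: "W = 0"
    using diag w12 w13 w23 sym' by (simp add: vec_eq_iff forall_3)
  with T(3) show ?thesis by simp
qed

definition stable_price :: "real \<Rightarrow> real \<Rightarrow> real \<Rightarrow> real \<Rightarrow> real" where
  "stable_price \<rho> tm x y = (1 - nu \<rho>) * x + eta \<rho> * y - tm / (2 + \<rho>)"

definition stable_W :: "real \<Rightarrow> real \<Rightarrow> real \<Rightarrow> real \<Rightarrow> mat3" where
  "stable_W \<rho> tm ta tb =
     (let x = (ta - stable_price \<rho> tm ta tb) / 2; y = (tb - stable_price \<rho> tm tb ta) / 2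
      in vector [vector [0, x, y], vector [x, 0, 0], vector [y, 0, 0]])"

definition stable_P :: "real \<Rightarrow> real \<Rightarrow> real \<Rightarrow> real \<Rightarrow> mat3" where
  "stable_P \<rho> tm ta tb =
     (let p = stable_price \<rho> tm ta tb; q = stable_price \<rho> tm tb ta
      in vector [vector [0, p, q], vector [- p, 0, 0], vector [- q, 0, 0]])"

lemma stable_price_balance:
  assumes "\<bar>\<rho>\<bar> < 2"
  shows "2 * stable_price \<rho> tm x y + \<rho> * stable_price \<rho> tm y x = x + \<rho> * y - tm"
proof -
  define \<alpha> where "\<alpha> = tm / (2 + \<rho>)"
  have "2 * stable_price \<rho> tm x y + \<rho> * stable_price \<rho> tm y x
      = (2 * (1 - nu \<rho>) + \<rho> * eta \<rho>) * x + (2 * eta \<rho> + \<rho> * (1 - nu \<rho>)) * y - (2 + \<rho>) * \<alpha>"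
    unfolding stable_price_def \<alpha>_def[symmetric] by (simp add: algebra_simps)
  also have "\<dots> = x + \<rho> * y - tm"
    unfolding nu_eta_system_1[OF assms] nu_eta_system_2[OF assms] \<alpha>_def using assms by simp
  finally show ?thesis .
qed

lemma is_stable_point_stable_W_P:
  assumes "\<bar>\<rho>\<bar> < 2"
  shows "is_stable_point (reported_beliefs tm ta tb) (Sigma_rho \<rho>) (mat 1)
           (stable_W \<rho> tm ta tb) (stable_P \<rho> tm ta tb)"
  using stable_price_balance[OF assms, of tm ta tb] stable_price_balance[OF assms, of tm tb ta]
  unfolding is_stable_point_def
  by (simp add: vec_eq_iff forall_3 transpose_def stable_W_def stable_P_def Let_def
      reported_beliefs_def Sigma_rho_mult_rows field_simps)

lemma stable_point_reported:
  assumes "\<bar>\<rho>\<bar> < 1"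
  shows "stable_point (reported_beliefs tm ta tb) (Sigma_rho \<rho>) (mat 1)
           = (stable_W \<rho> tm ta tb, stable_P \<rho> tm ta tb)"
  unfolding stable_point_def
proof (rule the_equality)
  have \<rho>: "\<bar>\<rho>\<bar> < 2" using assms by simp
  then show "case (stable_W \<rho> tm ta tb, stable_P \<rho> tm ta tb) of (W, P) \<Rightarrow>
      is_stable_point (reported_beliefs tm ta tb) (Sigma_rho \<rho>) (mat 1) W P"
    by (simp add: is_stable_point_stable_W_P)
  fix WP
  assume "case WP of (W, P) \<Rightarrow> is_stable_point (reported_beliefs tm ta tb) (Sigma_rho \<rho>) (mat 1) W P"
  moreover obtain W P where WP: "WP = (W, P)" by fastforce
  ultimately have "is_stable_point (reported_beliefs tm ta tb) (Sigma_rho \<rho>) (mat 1) W P" by simp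
  from is_stable_point_diff[OF this is_stable_point_stable_W_P[OF \<rho>]]
  have "W - stable_W \<rho> tm ta tb = 0 \<and> P - stable_P \<rho> tm ta tb = 0"
    by (rule stable_point_homogeneous_trivial[OF assms])
  then show "WP = (stable_W \<rho> tm ta tb, stable_P \<rho> tm ta tb)" by (simp add: WP)
qed

definition fund_utility :: "real \<Rightarrow> real \<Rightarrow> real \<Rightarrow> real" where
  "fund_utility a t p = (t - p) / 2 * (a - p) - ((t - p) / 2)\<^sup>2"

lemma g_fund2_eq:
  assumes "\<bar>\<rho>\<bar> < 1"
  shows "g m a \<rho> 2 tm ta tb = fund_utility a ta (stable_price \<rho> tm ta tb)"
  unfolding g_def utility_def stable_point_reported[OF assms]
  by (simp add: stable_W_def stable_P_def Let_def fund_utility_def matrix_vector_mult_def axis_def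
      sum_3 inner_vec_def column_def true_beliefs_def Sigma_rho_def power2_eq_square)

lemma g_fund3_eq_g_fund2:
  assumes "\<bar>\<rho>\<bar> < 1"
  shows "g m a \<rho> 3 tm ta tb = g m a \<rho> 2 tm tb ta"
  unfolding g_fund2_eq[OF assms] g_def utility_def stable_point_reported[OF assms]
  by (simp add: stable_W_def stable_P_def Let_def fund_utility_def matrix_vector_mult_def axis_def
      sum_3 inner_vec_def column_def true_beliefs_def Sigma_rho_def power2_eq_square)

definition unique_maximizer :: "(real \<Rightarrow> real) \<Rightarrow> real \<Rightarrow> bool" where
  "unique_maximizer f t0 \<longleftrightarrow> (\<forall>t. f t \<le> f t0) \<and> (\<forall>t'. (\<forall>t. f t \<le> f t') \<longrightarrow> t' = t0)"

lemma unique_maximizer_concave_square: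
  fixes f :: "real \<Rightarrow> real"
  assumes "\<And>t. f t = f t0 - K * (t - t0)\<^sup>2" and "K > 0"
  shows "unique_maximizer f t0"
  unfolding unique_maximizer_def
proof (intro conjI allI impI)
  fix t show "f t \<le> f t0" using assms(1)[of t] assms(2) by simp
next
  fix t' assume "\<forall>t. f t \<le> f t'"
  then have "f t0 \<le> f t'" ..
  then have "K * (t' - t0)\<^sup>2 \<le> 0" using assms(1)[of t'] by simp
  then show "t' = t0" using assms(2) by (simp add: mult_le_0_iff)
qed

lemma fund_utility_affine_price:
  fixes \<nu> k a t :: real
  assumes "\<nu> * (2 - \<nu>) \<noteq> 0"
  defines "t0 \<equiv> (\<nu> * a + (1 - \<nu>) * k) / (\<nu> * (2 - \<nu>))"
  shows "fund_utility a t ((1 - \<nu>) * t + k)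
       = fund_utility a t0 ((1 - \<nu>) * t0 + k) - \<nu> * (2 - \<nu>) / 4 * (t - t0)\<^sup>2"
proof -
  have "\<nu> * (2 - \<nu>) * t0 = \<nu> * a + (1 - \<nu>) * k" using assms(1) by (simp add: t0_def)
  moreover have "fund_utility a t ((1 - \<nu>) * t + k)
      = fund_utility a t0 ((1 - \<nu>) * t0 + k)
        + (t - t0) * (\<nu> * a + (1 - \<nu>) * k - \<nu> * (2 - \<nu>) * t0) / 2 - \<nu> * (2 - \<nu>) / 4 * (t - t0)\<^sup>2"
    unfolding fund_utility_def by (simp add: field_simps power2_eq_square)
  ultimately show ?thesis by simp
qed

lemma fund2_best_response:
  assumes "\<bar>\<rho>\<bar> < 1"
  shows "unique_maximizer (\<lambda>ta. g m a \<rho> 2 tm ta tb)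
    ((a * nu \<rho> - tm / (2 + \<rho>) * (1 - nu \<rho>)) / (nu \<rho> * (2 - nu \<rho>))
      + eta \<rho> * (1 - nu \<rho>) / (nu \<rho> * (2 - nu \<rho>)) * tb)" (is "unique_maximizer _ ?t0")
proof -
  let ?\<nu> = "nu \<rho>" and ?k = "eta \<rho> * tb - tm / (2 + \<rho>)"
  have "0 < ?\<nu>" "?\<nu> < 1" using assms nu_pos nu_less_one by auto
  then have K: "0 < ?\<nu> * (2 - ?\<nu>)" by simp
  have price: "stable_price \<rho> tm t tb = (1 - ?\<nu>) * t + ?k" for t
    by (simp add: stable_price_def)
  have "?\<nu> * a + (1 - ?\<nu>) * ?k
      = (a * ?\<nu> - tm / (2 + \<rho>) * (1 - ?\<nu>)) + eta \<rho> * (1 - ?\<nu>) * tb"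
    by (simp only: algebra_simps)
  then have vertex: "(?\<nu> * a + (1 - ?\<nu>) * ?k) / (?\<nu> * (2 - ?\<nu>)) = ?t0"
    by (simp only: add_divide_distrib times_divide_eq_left)
  have "g m a \<rho> 2 tm t tb = g m a \<rho> 2 tm ?t0 tb - ?\<nu> * (2 - ?\<nu>) / 4 * (t - ?t0)\<^sup>2" for t
    unfolding g_fund2_eq[OF assms] price
    using fund_utility_affine_price[where k = ?k and a = a and t = t, OF less_imp_neq[OF K, symmetric]]
    unfolding vertex .
  moreover have "0 < ?\<nu> * (2 - ?\<nu>) / 4" using K by simp
  ultimately show ?thesis by (rule unique_maximizer_concave_square)
qed

theorem mainTheorem12:
  fixes m a \<rho> tm :: real
  assumes "-1 < \<rho>" and "\<rho> < 1"
  defines "\<alpha> \<equiv> tm / (2 + \<rho>)"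
  defines "c \<equiv> (a * nu \<rho> - \<alpha> * (1 - nu \<rho>)) / (nu \<rho> * (2 - nu \<rho>))"
  defines "s \<equiv> eta \<rho> * (1 - nu \<rho>) / (nu \<rho> * (2 - nu \<rho>))"
  shows "(\<forall>tb. (\<forall>ta. g m a \<rho> 2 tm ta tb \<le> g m a \<rho> 2 tm (c + s * tb) tb)
              \<and> (\<forall>ta'. (\<forall>ta. g m a \<rho> 2 tm ta tb \<le> g m a \<rho> 2 tm ta' tb) \<longrightarrow> ta' = c + s * tb))
       \<and> (\<forall>ta. (\<forall>tb. g m a \<rho> 3 tm ta tb \<le> g m a \<rho> 3 tm ta (c + s * ta))
              \<and> (\<forall>tb'. (\<forall>tb. g m a \<rho> 3 tm ta tb \<le> g m a \<rho> 3 tm ta tb') \<longrightarrow> tb' = c + s * ta))"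
proof -
  have \<rho>: "\<bar>\<rho>\<bar> < 1" using assms(1,2) by linarith
  have "unique_maximizer (\<lambda>ta. g m a \<rho> 2 tm ta tb) (c + s * tb)" for tb
    using fund2_best_response[OF \<rho>] by (simp add: c_def s_def \<alpha>_def)
  moreover have "unique_maximizer (\<lambda>tb. g m a \<rho> 3 tm ta tb) (c + s * ta)" for ta
    using calculation[of ta] by (simp add: g_fund3_eq_g_fund2[OF \<rho>])
  ultimately show ?thesis unfolding unique_maximizer_def by blast
qed

end
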